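(* Let $\mathcal{K}\subseteq\mathbb{R}^n$ be a proper convex cone with a $\nu$-LHSCB $f$ with gradient $g$, let $\mathbf{w}\in(\mathcal{K}^* )^\circ$, and let $\mathbf{x}_0\in\mathcal{K}^\circ$ with $\mathbf{w}^\top\mathbf{x}_0=1$. Let $\mathbf{e}=-\frac{g(\mathbf{x}_0)}{\nu}$ and consider the pair of problems \[\min\{\nu\mathbf{w}^\top\mathbf{x}:\ \mathbf{e}^\top\mathbf{x}=1,\ \mathbf{x}\in\mathcal{K}\},\qquad \max\{y:\ y\mathbf{e}+\mathbf{s}=\nu\mathbf{w},\ \mathbf{s}\in\mathcal{K}^*,\ y\in\mathbb{R}\}.\] Then strong duality holds between these problems with attained optimal solutions, the optimal value is positive, and there are strictly feasible solutions $(\mathbf{x},y,\mathbf{s})$ (i.e. $\mathbf{x}\in\mathcal{K}^\circ$, $\mathbf{e}^\top\mathbf{x}=1$, $\mathbf{s}\in(\mathcal{K}^* )^\circ$, $y\mathbf{e}+\mathbf{s}=\nu\mathbf{w}$) with $y=0$.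
   Context: $\mathcal{K}\subseteq\mathbb{R}^n$ is a proper (closed, convex, pointed, full-dimensional) cone with interior $\mathcal{K}^\circ$ and dual cone $\mathcal{K}^*=\{\mathbf{s}:\mathbf{s}^\top\mathbf{x}\ge0\ \forall\mathbf{x}\in\mathcal{K}\}$. A $\nu$-LHSCB for $\mathcal{K}$ is a strictly convex, three times differentiable $f:\mathcal{K}^\circ\to\mathbb{R}$ with $f(\mathbf{x})\to\infty$ at the boundary of $\mathcal{K}$, $|D^3f(\mathbf{x})[\mathbf{h},\mathbf{h},\mathbf{h}]|\le 2\,(D^2f(\mathbf{x})[\mathbf{h},\mathbf{h}])^{3/2}$, $\nu=\sup_{\mathbf{x}\in\mathcal{K}^\circ}g(\mathbf{x})^\top H(\mathbf{x})^{-1}g(\mathbf{x})<\infty$ ($H$ the Hessian), and $f(t\mathbf{x})=f(\mathbf{x})-\nu\ln t$ for $t>0$. *)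

theory Defs
  imports "HOL-Analysis.Analysis"
begin

definition proper_cone :: "'a::euclidean_space set \<Rightarrow> bool" where
  "proper_cone K \<longleftrightarrow> cone K \<and> convex K \<and> closed K \<and>
     (\<forall>x. x \<in> K \<and> - x \<in> K \<longrightarrow> x = 0) \<and> interior K \<noteq> {}"

definition dual_cone :: "'a::euclidean_space set \<Rightarrow> 'a set" where
  "dual_cone K = {s. \<forall>x\<in>K. s \<bullet> x \<ge> 0}"

definition strictly_convex_on :: "'a::real_vector set \<Rightarrow> ('a \<Rightarrow> real) \<Rightarrow> bool" where
  "strictly_convex_on S f \<longleftrightarrow> convex S \<and>
     (\<forall>x\<in>S. \<forall>y\<in>S. \<forall>t. x \<noteq> y \<and> 0 < t \<and> t < 1 \<longrightarrow>
        f ((1 - t) *\<^sub>R x + t *\<^sub>R y) < (1 - t) * f x + t * f y)"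

text \<open>\<open>LHSCB K f g \<nu>\<close>: \<open>f\<close> is a \<open>\<nu>\<close>-logarithmically homogeneous self-concordant
  barrier for \<open>K\<close> with gradient \<open>g\<close>. \<open>H x\<close> is the Hessian (as a linear map) and
  \<open>T x k h\<close> the third derivative, i.e. \<open>D\<^sup>3f(x)[k,h,\<cdot>]\<close>.\<close>
definition LHSCB :: "'a::euclidean_space set \<Rightarrow> ('a \<Rightarrow> real) \<Rightarrow> ('a \<Rightarrow> 'a) \<Rightarrow> real \<Rightarrow> bool" where
  "LHSCB K f g \<nu> \<longleftrightarrow>
     (\<exists>H T.
        (\<forall>x\<in>interior K. (f has_derivative (\<lambda>h. g x \<bullet> h)) (at x)) \<and>
        (\<forall>x\<in>interior K. (g has_derivative H x) (at x)) \<and>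
        (\<forall>x\<in>interior K. \<forall>h. ((\<lambda>y. H y h) has_derivative (\<lambda>k. T x k h)) (at x)) \<and>
        strictly_convex_on (interior K) f \<and>
        (\<forall>x0\<in>frontier K. filterlim f at_top (at x0 within interior K)) \<and>
        (\<forall>x\<in>interior K. \<forall>h. \<bar>T x h h \<bullet> h\<bar> \<le> 2 * (H x h \<bullet> h) powr (3/2)) \<and>
        (\<forall>x\<in>interior K. bij (H x)) \<and>
        bdd_above ((\<lambda>x. g x \<bullet> inv (H x) (g x)) ` interior K) \<and>
        \<nu> = (SUP x\<in>interior K. g x \<bullet> inv (H x) (g x)) \<and>
        (\<forall>x\<in>interior K. \<forall>t>0. f (t *\<^sub>R x) = f x - \<nu> * ln t))"

end

theory Submission imports Defs begin

text \<open>Since \<open>w\<close> is interior to the dual cone, \<open>x \<mapsto> w \<bullet> x\<close> grows at least linearly in \<open>\<parallel>x\<parallel>\<close>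
  on \<open>K\<close>, so it attains its minimum \<open>x\<^sub>*\<close> on the closed slice \<open>{x \<in> K. e \<bullet> x = 1}\<close>, which
  contains \<open>x\<^sub>0\<close> because Euler's identity \<open>g x\<^sub>0 \<bullet> x\<^sub>0 = -\<nu>\<close> for the logarithmically
  homogeneous barrier gives \<open>e \<bullet> x\<^sub>0 = 1\<close>. Homogeneity of \<open>K\<close> turns primal optimality into
  dual feasibility of \<open>s = \<nu> w - (\<nu> w \<bullet> x\<^sub>*) e\<close>, and weak duality then makes
  \<open>y = \<nu> w \<bullet> x\<^sub>* > 0\<close> dual optimal. The strictly feasible pair is \<open>(x\<^sub>0, \<nu> w)\<close> with \<open>y = 0\<close>.\<close>

lemma cone_interior_scaleR:
  fixes S :: "'a::euclidean_space set"
  assumes "cone S" "c > 0" "x \<in> interior S"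
  shows "c *\<^sub>R x \<in> interior S"
proof -
  have "open ((*\<^sub>R) c ` interior S)" using \<open>c > 0\<close> by (intro open_scaling) auto
  moreover have "(*\<^sub>R) c ` interior S \<subseteq> S"
    using assms interior_subset mem_cone by fastforce
  ultimately have "(*\<^sub>R) c ` interior S \<subseteq> interior S"
    by (rule interior_maximal[rotated])
  then show ?thesis using \<open>x \<in> interior S\<close> by auto
qed

lemma cone_dual_cone: "cone (dual_cone K)"
  unfolding cone_def dual_cone_def by simp

lemma pointed_zero_notin_interior:
  fixes S :: "'a::euclidean_space set"
  assumes "\<And>x. x \<in> S \<Longrightarrow> - x \<in> S \<Longrightarrow> x = 0"
  shows "0 \<notin> interior S"
proof
  assume "0 \<in> interior S"
  then obtain r where "r > 0" "ball 0 r \<subseteq> S" using mem_interior by blast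
  obtain b :: 'a where "b \<in> Basis" using nonempty_Basis by blast
  define v where "v = (r / 2) *\<^sub>R b"
  have "norm v = r / 2" using \<open>b \<in> Basis\<close> \<open>r > 0\<close> unfolding v_def by simp
  then have "v \<in> S" "- v \<in> S" using \<open>r > 0\<close> \<open>ball 0 r \<subseteq> S\<close> by (auto simp: subset_iff)
  then have "v = 0" using assms by blast
  with \<open>norm v = r / 2\<close> \<open>r > 0\<close> show False by simp
qed

lemma proper_cone_zero_in_frontier:
  assumes "proper_cone K"
  shows "0 \<in> frontier K"
proof -
  from assms have "cone K" "closed K" "K \<noteq> {}"
    and pointed: "\<And>x. x \<in> K \<Longrightarrow> - x \<in> K \<Longrightarrow> x = 0"
    unfolding proper_cone_def using interior_subset by blast+
  then have "0 \<in> K" using cone_contains_0 by blast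
  with \<open>closed K\<close> pointed_zero_notin_interior[OF pointed] show ?thesis
    by (simp add: frontier_def)
qed

lemma LHSCB_has_derivative:
  "LHSCB K f g \<nu> \<Longrightarrow> x \<in> interior K \<Longrightarrow> (f has_derivative (\<lambda>h. g x \<bullet> h)) (at x)"
  unfolding LHSCB_def by blast

lemma LHSCB_barrier:
  "LHSCB K f g \<nu> \<Longrightarrow> x \<in> frontier K \<Longrightarrow> filterlim f at_top (at x within interior K)"
  unfolding LHSCB_def by blast

lemma LHSCB_log_homogeneous:
  "LHSCB K f g \<nu> \<Longrightarrow> x \<in> interior K \<Longrightarrow> t > 0 \<Longrightarrow> f (t *\<^sub>R x) = f x - \<nu> * ln t"
  unfolding LHSCB_def by blast

lemma LHSCB_inner_gradient_self:
  assumes L: "LHSCB K f g \<nu>" and x: "x \<in> interior K"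
  shows "g x \<bullet> x = - \<nu>"
proof -
  have "((\<lambda>t::real. t *\<^sub>R x) has_derivative (\<lambda>s. s *\<^sub>R x)) (at 1)"
    by (intro derivative_eq_intros) auto
  moreover have "(f has_derivative (\<lambda>h. g x \<bullet> h)) (at ((\<lambda>t::real. t *\<^sub>R x) 1))"
    using LHSCB_has_derivative[OF L x] by simp
  ultimately have "((\<lambda>t. f (t *\<^sub>R x)) has_field_derivative (g x \<bullet> x)) (at 1)"
    unfolding has_field_derivative_def
    by (auto dest: has_derivative_compose simp: mult.commute[of _ "g x \<bullet> x"])
  moreover have "((\<lambda>t. f (t *\<^sub>R x)) has_field_derivative (- \<nu>)) (at 1)"
  proof (rule has_field_derivative_transform_within_open[where S = "{0<..}"])
    show "((\<lambda>t. f x - \<nu> * ln t) has_field_derivative (- \<nu>)) (at 1)"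
      by (auto intro!: derivative_eq_intros)
  qed (use LHSCB_log_homogeneous[OF L x] in auto)
  ultimately show ?thesis by (rule DERIV_unique)
qed

lemma LHSCB_nu_pos:
  assumes K: "proper_cone K" and L: "LHSCB K f g \<nu>"
  shows "\<nu> > 0"
proof -
  obtain x where x: "x \<in> interior K" using K unfolding proper_cone_def by blast
  have "cone K" using K unfolding proper_cone_def by blast
  have "x \<noteq> 0" using x proper_cone_zero_in_frontier[OF K] by (auto simp: frontier_def)
  have "filterlim (\<lambda>t. t *\<^sub>R x) (at 0 within interior K) (at_right 0)"
  proof (subst filterlim_at, intro conjI)
    show "\<forall>\<^sub>F t in at_right 0. t *\<^sub>R x \<in> interior K \<and> t *\<^sub>R x \<noteq> 0"
      using cone_interior_scaleR[OF \<open>cone K\<close> _ x] \<open>x \<noteq> 0\<close> eventually_at_right_less[of 0]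
      by (auto elim!: eventually_mono)
    have "((\<lambda>t. t *\<^sub>R x) \<longlongrightarrow> 0 *\<^sub>R x) (at_right 0)"
      by (intro tendsto_intros)
    then show "((\<lambda>t. t *\<^sub>R x) \<longlongrightarrow> 0) (at_right 0)" by simp
  qed
  from filterlim_compose[OF LHSCB_barrier[OF L proper_cone_zero_in_frontier[OF K]] this]
  have "\<forall>\<^sub>F t in at_right 0. f (t *\<^sub>R x) > f x"
    by (simp add: filterlim_at_top_dense)
  moreover have "\<forall>\<^sub>F t in at_right (0::real). 0 < t \<and> t < 1"
    unfolding eventually_at_right_field by (intro exI[of _ 1]) auto
  ultimately obtain t where "f (t *\<^sub>R x) > f x" "0 < t" "t < 1"
    using eventually_happens[OF eventually_conj] by fastforce
  then have "\<nu> * ln t < 0" "ln t < 0"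
    using LHSCB_log_homogeneous[OF L x] by auto
  then show ?thesis by (simp add: mult_less_0_iff)
qed

lemma interior_dual_cone_coercive:
  fixes K :: "'a::euclidean_space set"
  assumes "c \<in> interior (dual_cone K)"
  obtains \<delta> where "\<delta> > 0" "\<And>x. x \<in> K \<Longrightarrow> \<delta> * norm x \<le> c \<bullet> x"
proof -
  obtain r where "r > 0" and ball: "ball c r \<subseteq> dual_cone K" using assms mem_interior by blast
  have "r / 2 * norm x \<le> c \<bullet> x" if "x \<in> K" for x
  proof (cases "x = 0")
    case False
    define u where "u = c - (r / 2 / norm x) *\<^sub>R x"
    have "dist c u = r / 2" using False \<open>r > 0\<close> unfolding u_def dist_norm by simp
    then have "u \<in> dual_cone K" using ball \<open>r > 0\<close> by (auto simp: subset_iff)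
    then have "0 \<le> u \<bullet> x" using \<open>x \<in> K\<close> unfolding dual_cone_def by auto
    also have "u \<bullet> x = c \<bullet> x - r / 2 / norm x * (norm x)\<^sup>2"
      unfolding u_def by (simp add: inner_diff_left power2_norm_eq_inner)
    also have "\<dots> = c \<bullet> x - r / 2 * norm x"
      using False by (simp add: power2_eq_square)
    finally show ?thesis by simp
  qed simp
  moreover have "r / 2 > 0" using \<open>r > 0\<close> by simp
  ultimately show ?thesis using that by blast
qed

lemma coercive_linear_attains_min:
  fixes K :: "'a::euclidean_space set"
  assumes "closed K" "\<delta> > 0" "\<And>x. x \<in> K \<Longrightarrow> \<delta> * norm x \<le> c \<bullet> x"
    and "x0 \<in> K" "e \<bullet> x0 = 1"
  obtains xs where "xs \<in> K" "e \<bullet> xs = 1" "\<And>x. x \<in> K \<Longrightarrow> e \<bullet> x = 1 \<Longrightarrow> c \<bullet> xs \<le> c \<bullet> x"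
proof -
  define S where "S = K \<inter> {x. e \<bullet> x = 1} \<inter> {x. c \<bullet> x \<le> c \<bullet> x0}"
  have "closed S"
    unfolding S_def using \<open>closed K\<close> by (intro closed_Int closed_hyperplane closed_halfspace_le)
  moreover have "bounded S"
  proof -
    have "norm x \<le> c \<bullet> x0 / \<delta>" if "x \<in> S" for x
      using assms(3)[of x] that \<open>\<delta> > 0\<close> unfolding S_def by (auto simp: field_simps)
    then show ?thesis unfolding bounded_iff by blast
  qed
  moreover have "x0 \<in> S" using assms unfolding S_def by auto
  moreover have "continuous_on S ((\<bullet>) c)" by (intro continuous_intros)
  ultimately obtain xs where "xs \<in> S" and min: "\<And>x. x \<in> S \<Longrightarrow> c \<bullet> xs \<le> c \<bullet> x"
    using continuous_attains_inf[of S "(\<bullet>) c"] by (metis compact_eq_bounded_closed empty_iff)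
  show ?thesis
  proof
    show "xs \<in> K" "e \<bullet> xs = 1" using \<open>xs \<in> S\<close> unfolding S_def by auto
    show "c \<bullet> xs \<le> c \<bullet> x" if "x \<in> K" "e \<bullet> x = 1" for x
      using min[of x] that \<open>xs \<in> S\<close> unfolding S_def by force
  qed
qed

lemma dual_cone_weak_duality:
  assumes "s \<in> dual_cone K" "x \<in> K" "e \<bullet> x = 1" "y *\<^sub>R e + s = c"
  shows "y \<le> c \<bullet> x"
proof -
  have "0 \<le> s \<bullet> x" using assms(1,2) unfolding dual_cone_def by auto
  moreover have "c \<bullet> x = y + s \<bullet> x"
    using assms(3,4) by (auto simp: inner_add_left)
  ultimately show ?thesis by linarith
qed

lemma cone_minimizer_dual_feasible:
  assumes "cone K" "c \<in> dual_cone K" "xs \<in> K"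
    and min: "\<And>x. x \<in> K \<Longrightarrow> e \<bullet> x = 1 \<Longrightarrow> c \<bullet> xs \<le> c \<bullet> x"
  shows "c - (c \<bullet> xs) *\<^sub>R e \<in> dual_cone K"
  unfolding dual_cone_def
proof (intro CollectI ballI)
  fix x assume "x \<in> K"
  have c_nonneg: "0 \<le> c \<bullet> z" if "z \<in> K" for z
    using \<open>c \<in> dual_cone K\<close> that unfolding dual_cone_def by auto
  have "(c \<bullet> xs) * (e \<bullet> x) \<le> c \<bullet> x"
  proof (cases "e \<bullet> x > 0")
    case True
    have "c \<bullet> xs \<le> c \<bullet> ((1 / (e \<bullet> x)) *\<^sub>R x)"
      using True \<open>x \<in> K\<close> \<open>cone K\<close> by (intro min) (auto simp: mem_cone)
    then show ?thesis using True by (simp add: field_simps)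
  next
    case False
    then show ?thesis
      using c_nonneg[OF \<open>xs \<in> K\<close>] c_nonneg[OF \<open>x \<in> K\<close>]
      by (meson mult_nonneg_nonpos not_less order_trans)
  qed
  then show "0 \<le> (c - (c \<bullet> xs) *\<^sub>R e) \<bullet> x" by (simp add: inner_diff_left)
qed

lemma conic_strong_duality:
  fixes K :: "'a::euclidean_space set"
  assumes "cone K" "closed K" "c \<in> interior (dual_cone K)" "x0 \<in> K" "e \<bullet> x0 = 1"
  obtains xs ys ss where "xs \<in> K" "e \<bullet> xs = 1" "ss \<in> dual_cone K" "ys *\<^sub>R e + ss = c"
    "\<And>x. x \<in> K \<Longrightarrow> e \<bullet> x = 1 \<Longrightarrow> c \<bullet> xs \<le> c \<bullet> x"
    "\<And>y s. s \<in> dual_cone K \<Longrightarrow> y *\<^sub>R e + s = c \<Longrightarrow> y \<le> ys"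
    "c \<bullet> xs = ys" "ys > 0"
proof -
  obtain \<delta> where "\<delta> > 0" and coercive: "\<And>x. x \<in> K \<Longrightarrow> \<delta> * norm x \<le> c \<bullet> x"
    using interior_dual_cone_coercive[OF assms(3)] by blast
  obtain xs where xs: "xs \<in> K" "e \<bullet> xs = 1"
    and min: "\<And>x. x \<in> K \<Longrightarrow> e \<bullet> x = 1 \<Longrightarrow> c \<bullet> xs \<le> c \<bullet> x"
    using coercive_linear_attains_min[OF \<open>closed K\<close> \<open>\<delta> > 0\<close> coercive assms(4,5)] by blast
  have "c - (c \<bullet> xs) *\<^sub>R e \<in> dual_cone K"
    using \<open>cone K\<close> interior_subset[of "dual_cone K"] assms(3) xs(1) min
    by (intro cone_minimizer_dual_feasible) auto
  moreover have "c \<bullet> xs > 0"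
  proof -
    have "xs \<noteq> 0" using xs(2) by auto
    then have "0 < \<delta> * norm xs" using \<open>\<delta> > 0\<close> by simp
    also have "\<dots> \<le> c \<bullet> xs" using coercive[OF xs(1)] .
    finally show ?thesis .
  qed
  ultimately show ?thesis
    using xs min dual_cone_weak_duality[OF _ xs] by (intro that) auto
qed

theorem lemma3p2:
  fixes K :: "'a::euclidean_space set" and f :: "'a \<Rightarrow> real" and g :: "'a \<Rightarrow> 'a"
    and \<nu> :: real and w x0 :: 'a
  assumes "proper_cone K"
    and "LHSCB K f g \<nu>"
    and "w \<in> interior (dual_cone K)"
    and "x0 \<in> interior K" and "w \<bullet> x0 = 1"
  shows "let e = - (1 / \<nu>) *\<^sub>R g x0 in
    (\<exists>xs ys ss.
       xs \<in> K \<and> e \<bullet> xs = 1 \<and>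
       ss \<in> dual_cone K \<and> ys *\<^sub>R e + ss = \<nu> *\<^sub>R w \<and>
       (\<forall>x. x \<in> K \<and> e \<bullet> x = 1 \<longrightarrow> \<nu> * (w \<bullet> xs) \<le> \<nu> * (w \<bullet> x)) \<and>
       (\<forall>y s. s \<in> dual_cone K \<and> y *\<^sub>R e + s = \<nu> *\<^sub>R w \<longrightarrow> y \<le> ys) \<and>
       \<nu> * (w \<bullet> xs) = ys \<and> ys > 0) \<and>
    (\<exists>x s. x \<in> interior K \<and> e \<bullet> x = 1 \<and>
       s \<in> interior (dual_cone K) \<and> 0 *\<^sub>R e + s = \<nu> *\<^sub>R w)"
proof -
  define e where "e = - (1 / \<nu>) *\<^sub>R g x0"
  have "\<nu> > 0" using LHSCB_nu_pos[OF assms(1,2)] .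
  have "cone K" "closed K" using assms(1) unfolding proper_cone_def by auto
  have "e \<bullet> x0 = 1"
    using LHSCB_inner_gradient_self[OF assms(2,4)] \<open>\<nu> > 0\<close> unfolding e_def by simp
  have x0: "x0 \<in> K" using assms(4) interior_subset by blast
  have \<nu>w: "\<nu> *\<^sub>R w \<in> interior (dual_cone K)"
    using cone_interior_scaleR[OF cone_dual_cone \<open>\<nu> > 0\<close> assms(3)] .
  obtain xs ys ss where "xs \<in> K" "e \<bullet> xs = 1" "ss \<in> dual_cone K" "ys *\<^sub>R e + ss = \<nu> *\<^sub>R w"
    and "\<And>x. x \<in> K \<Longrightarrow> e \<bullet> x = 1 \<Longrightarrow> (\<nu> *\<^sub>R w) \<bullet> xs \<le> (\<nu> *\<^sub>R w) \<bullet> x"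
    and "\<And>y s. s \<in> dual_cone K \<Longrightarrow> y *\<^sub>R e + s = \<nu> *\<^sub>R w \<Longrightarrow> y \<le> ys"
    and "(\<nu> *\<^sub>R w) \<bullet> xs = ys" "ys > 0"
    by (rule conic_strong_duality[OF \<open>cone K\<close> \<open>closed K\<close> \<nu>w x0 \<open>e \<bullet> x0 = 1\<close>]) blast
  then show ?thesis
    unfolding Let_def e_def[symmetric] using assms(4) \<open>e \<bullet> x0 = 1\<close> \<nu>w
    by (intro conjI exI[of _ xs] exI[of _ ys] exI[of _ ss] exI[of _ x0] exI[of _ "\<nu> *\<^sub>R w"])
      auto
qed

end
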